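(* For any even integer $n\ge4$ and any choice function $\eta$, there exists a $(1/\alpha_n)$-Hölder continuous surjection $f:[0,1]\to K^\eta$, where $\alpha_n=\frac{\log(5n-6)}{\log n}$.
   Context: Let $\mathcal{A}_n=\{1,\dots,5n-6\}$, $\mathcal{A}_n^m$ words of length $m$ ($\mathcal{A}_n^0=\{\varepsilon\}$), $\mathcal{A}_n^*=\bigcup_m\mathcal{A}_n^m$. Define maps $\psi^1_{n,j},\psi^2_{n,j}:\mathbb{R}^2\to\mathbb{R}^2$, $j\in\mathcal{A}_n$, each of the form $x\mapsto\frac1nx+b$: for $j=1,\dots,4n-4$, $\psi^1_{n,j}=\psi^2_{n,j}$ map $[0,1]^2$ onto the $4n-4$ squares of the grid of $n^2$ closed squares of side $1/n$ in $[0,1]^2$ meeting $\partial[0,1]^2$; for $j=4n-3+i$, $i=0,\dots,\frac n2-2$, $\psi^1_{n,j}(x)=\psi^2_{n,j}(x)=\frac1nx+(\frac12+\frac in,\frac1n)$; for $j=4n+\frac n2-4+i$, $i=0,\dots,\frac n2-2$, $\psi^1_{n,j}(x)=\frac1nx+(\frac{i+1}n,\frac2n)$, $\psi^2_{n,j}(x)=\frac1nx+(\frac{i+1}n,\frac1n)$. A choice function is any $\eta:\mathcal{A}_n^*\to\{1,2\}$; $\phi^\eta_\varepsilon=\mathrm{id}$, $\phi^\eta_w=\psi^{\eta(\varepsilon)}_{n,i_1}\circ\psi^{\eta(i_1)}_{n,i_2}\circ\cdots\circ\psi^{\eta(i_1\cdots i_{m-1})}_{n,i_m}$ for $w=i_1\cdots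 i_m$; $K^\eta=\bigcap_{m\ge0}\bigcup_{w\in\mathcal{A}_n^m}\phi^\eta_w([0,1]^2)$. *)

theory Defs
  imports "HOL-Analysis.Analysis"
begin

definition alph :: "nat \<Rightarrow> nat set" where
  "alph n = {1..5*n-6}"

text \<open>Letters 1..4n-4 enumerate the 4n-4 boundary grid squares (lower-left corners
  (a/n, c/n)): bottom row, top row, left column (interior), right column (interior).\<close>
definition offs :: "nat \<Rightarrow> nat \<Rightarrow> nat \<Rightarrow> real \<times> real" where
  "offs n e j =
    (if 1 \<le> j \<and> j \<le> n then (real (j - 1) / n, 0)
     else if n + 1 \<le> j \<and> j \<le> 2*n then (real (j - n - 1) / n, real (n - 1) / n)
     else if 2*n + 1 \<le> j \<and> j \<le> 3*n - 2 then (0, real (j - 2*n) / n)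
     else if 3*n - 1 \<le> j \<and> j \<le> 4*n - 4 then (real (n - 1) / n, real (j + 2 - 3*n) / n)
     else if 4*n - 3 \<le> j \<and> j \<le> 4*n - 3 + (n div 2 - 2)
       then (1/2 + real (j - (4*n - 3)) / n, 1 / n)
     else if 4*n + n div 2 - 4 \<le> j \<and> j \<le> 4*n + n div 2 - 4 + (n div 2 - 2)
       then (real (j - (4*n + n div 2 - 4) + 1) / n, if e = 1 then 2 / n else 1 / n)
     else (0, 0))"

definition psi :: "nat \<Rightarrow> nat \<Rightarrow> nat \<Rightarrow> real \<times> real \<Rightarrow> real \<times> real" where
  "psi n e j = (\<lambda>x. (1 / real n) *\<^sub>R x + offs n e j)"

text \<open>phi_aux n eta p w: composition along w, where p is the prefix already read.\<close>
fun phi_aux :: "nat \<Rightarrow> (nat list \<Rightarrow> nat) \<Rightarrow> nat list \<Rightarrow> nat list \<Rightarrow> real \<times> real \<Rightarrow> real \<times> real" where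
  "phi_aux n eta p [] = id"
| "phi_aux n eta p (i # w) = psi n (eta p) i \<circ> phi_aux n eta (p @ [i]) w"

definition phi :: "nat \<Rightarrow> (nat list \<Rightarrow> nat) \<Rightarrow> nat list \<Rightarrow> real \<times> real \<Rightarrow> real \<times> real" where
  "phi n eta w = phi_aux n eta [] w"

definition unit_square :: "(real \<times> real) set" where
  "unit_square = cbox (0, 0) (1, 1)"

definition Keta :: "nat \<Rightarrow> (nat list \<Rightarrow> nat) \<Rightarrow> (real \<times> real) set" where
  "Keta n eta = (\<Inter>m. \<Union>w \<in> {w. set w \<subseteq> alph n \<and> length w = m}. phi n eta w ` unit_square)"

definition holder_continuous_on :: "real \<Rightarrow> real set \<Rightarrow> (real \<Rightarrow> 'a::metric_space) \<Rightarrow> bool" where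
  "holder_continuous_on g S f \<longleftrightarrow>
     (\<exists>C. \<forall>s\<in>S. \<forall>t\<in>S. dist (f s) (f t) \<le> C * dist s t powr g)"

end

theory Submission
  imports Defs
begin

(* Each square phi_w([0,1]^2) is crossed along one of its diagonals, and this crossing is refined
   into a walk through the n x n grid of its 5n-6 subsquares joining the two ends of the diagonal;
   neighbouring cells of the walk share a corner because diagonals are chosen like the colours of a
   checkerboard. Iterating gives at every level m a chain of 2 (5n-6)^m squares of side n^-m in
   which consecutive squares touch and every square lies in its parent. Attaching the squares of
   level m to equally long subintervals of [0,1] defines a curve; parameters at distance about
   (5n-6)^-m lie in the same or in adjacent squares of level m, which gives the Hoelder exponent
   ln n / ln (5n-6). Finally the two walks of either diagonal type together use every letter in
   both directions, so every word of length m labels a square of level m and the curve fills K^eta. *)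

section \<open>Hoelder curves through nested chains of cells\<close>

lemma holder_continuous_on_imp_continuous_on:
  assumes "0 < g" and "holder_continuous_on g S f"
  shows "continuous_on S f"
proof -
  obtain C where C: "\<And>s t. s \<in> S \<Longrightarrow> t \<in> S \<Longrightarrow> dist (f s) (f t) \<le> C * dist s t powr g"
    using assms(2) unfolding holder_continuous_on_def by blast
  define C' where "C' = max C 1"
  have C': "dist (f s) (f t) \<le> C' * dist s t powr g" if "s \<in> S" "t \<in> S" for s t
    using C[OF that] mult_right_mono[of C C' "dist s t powr g"] by (simp add: C'_def)
  show ?thesis
    unfolding continuous_on_iff
  proof (intro ballI allI impI)
    fix x e :: real
    assume x: "x \<in> S" and e: "0 < e"
    have C'_pos: "0 < C'" by (simp add: C'_def)
    show "\<exists>d>0. \<forall>x'\<in>S. dist x' x < d \<longrightarrow> dist (f x') (f x) < e"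
    proof (intro exI conjI ballI impI)
      show "0 < (e / C') powr (1 / g)"
        using e C'_pos by simp
      fix x' assume x': "x' \<in> S" and close: "dist x' x < (e / C') powr (1 / g)"
      have "dist x' x powr g < ((e / C') powr (1 / g)) powr g"
        using close assms(1) by (intro powr_less_mono2) auto
      also have "\<dots> = e / C'"
        using assms(1) e C'_pos by (simp add: powr_powr)
      finally have "C' * dist x' x powr g < e"
        using C'_pos by (simp add: field_simps)
      then show "dist (f x') (f x) < e"
        using C'[OF x' x] by linarith
    qed
  qed
qed

lemma nat_floor_mult_div:
  assumes "0 < K"
  shows "nat \<lfloor>real K * x\<rfloor> div K = nat \<lfloor>x\<rfloor>"
proof -
  have "\<lfloor>real K * x\<rfloor> div int K = \<lfloor>x\<rfloor>"
    using floor_divide_real_eq_div[of "int K" "real K * x"] assms by simp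
  then show ?thesis
    by (metis nat_div_distrib' nat_int of_nat_0_le_iff)
qed

locale nested_cells =
  fixes M N :: nat and r D :: real and cell :: "nat \<Rightarrow> nat \<Rightarrow> 'a::complete_space set"
  assumes M_pos: "0 < M" and N_gt_1: "1 < N" and r_gt_1: "1 < r"
    and closed_cell: "k < M * N ^ m \<Longrightarrow> closed (cell m k)"
    and cell_nonempty: "k < M * N ^ m \<Longrightarrow> cell m k \<noteq> {}"
    and cell_Suc_subset: "k < M * N ^ Suc m \<Longrightarrow> cell (Suc m) k \<subseteq> cell m (k div N)"
    and dist_in_cell: "k < M * N ^ m \<Longrightarrow> x \<in> cell m k \<Longrightarrow> y \<in> cell m k \<Longrightarrow> dist x y \<le> D / r ^ m"
    and adjacent_cells_meet: "Suc k < M * N ^ m \<Longrightarrow> cell m k \<inter> cell m (Suc k) \<noteq> {}"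
begin

definition cell_index :: "nat \<Rightarrow> real \<Rightarrow> nat" where
  "cell_index m t = min (nat \<lfloor>real (M * N ^ m) * t\<rfloor>) (M * N ^ m - 1)"

lemma cell_index_less: "cell_index m t < M * N ^ m"
  using M_pos N_gt_1 unfolding cell_index_def by (simp add: min_less_iff_disj)

lemma cell_index_Suc: "cell_index (Suc m) t div N = cell_index m t"
proof -
  have scale: "real (M * N ^ Suc m) * t = real N * (real (M * N ^ m) * t)"
    by (simp add: algebra_simps)
  have "nat \<lfloor>real (M * N ^ Suc m) * t\<rfloor> div N = nat \<lfloor>real (M * N ^ m) * t\<rfloor>"
    unfolding scale using N_gt_1 by (intro nat_floor_mult_div) simp
  moreover have "(M * N ^ Suc m - 1) div N = M * N ^ m - 1"
  proof (rule div_nat_eqI)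
    show "N * (M * N ^ m - 1) \<le> M * N ^ Suc m - 1"
      using M_pos N_gt_1 by (simp add: algebra_simps diff_mult_distrib2)
    show "M * N ^ Suc m - 1 < N * Suc (M * N ^ m - 1)"
      using M_pos N_gt_1 by (simp add: algebra_simps)
  qed
  moreover have "min a b div N = min (a div N) (b div N)" for a b :: nat
    by (metis div_le_mono min.absorb_iff1 min.absorb_iff2 nle_le)
  ultimately show ?thesis
    unfolding cell_index_def by presburger
qed

lemma cell_index_of_nat: "k < M * N ^ m \<Longrightarrow> cell_index m (real k / real (M * N ^ m)) = k"
  using M_pos N_gt_1 unfolding cell_index_def by simp

lemma cell_index_mono: "s \<le> t \<Longrightarrow> cell_index m s \<le> cell_index m t"
  unfolding cell_index_def by (intro min.mono nat_mono floor_mono mult_left_mono) auto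

lemma cell_index_le_Suc:
  assumes "(t - s) * real (M * N ^ m) \<le> 1"
  shows "cell_index m t \<le> Suc (cell_index m s)"
proof -
  have "real (M * N ^ m) * t \<le> real (M * N ^ m) * s + 1"
    using assms by (simp add: algebra_simps)
  then have "\<lfloor>real (M * N ^ m) * t\<rfloor> \<le> \<lfloor>real (M * N ^ m) * s\<rfloor> + 1"
    by (metis floor_add_int floor_mono of_int_1)
  then show ?thesis
    unfolding cell_index_def by linarith
qed

lemma cell_index_nested: "m \<le> m' \<Longrightarrow> cell m' (cell_index m' t) \<subseteq> cell m (cell_index m t)"
proof (induction m' rule: dec_induct)
  case (step m')
  have "cell (Suc m') (cell_index (Suc m') t) \<subseteq> cell m' (cell_index m' t)"
    using cell_Suc_subset[OF cell_index_less] by (simp add: cell_index_Suc)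
  with step.IH show ?case by blast
qed simp

lemma D_nonneg: "0 \<le> D"
proof -
  obtain x where "x \<in> cell 0 0"
    using cell_nonempty[of 0 0] M_pos by auto
  then show ?thesis
    using dist_in_cell[of 0 0 x x] M_pos by simp
qed

lemma cell_diameter_small: "0 < e \<Longrightarrow> \<exists>m. D / r ^ m < e"
proof -
  assume "0 < e"
  moreover obtain m where "D / e < r ^ m"
    using real_arch_pow[OF r_gt_1] by blast
  ultimately have "D / r ^ m < e"
    using r_gt_1 by (simp add: field_simps)
  then show ?thesis ..
qed

definition curve :: "real \<Rightarrow> 'a" where
  "curve t = (SOME x. \<forall>m. x \<in> cell m (cell_index m t))"

lemma curve_in_cell: "curve t \<in> cell m (cell_index m t)"
proof -
  have "\<exists>x. \<forall>m. x \<in> cell m (cell_index m t)"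
  proof (rule decreasing_closed_nest[of "\<lambda>m. cell m (cell_index m t)"])
    show "closed (cell m (cell_index m t))" "cell m (cell_index m t) \<noteq> {}" for m
      using closed_cell cell_nonempty cell_index_less by auto
    show "cell m' (cell_index m' t) \<subseteq> cell m (cell_index m t)" if "m \<le> m'" for m m'
      using cell_index_nested[OF that] .
    fix e :: real assume "0 < e"
    then obtain m where "D / r ^ m < e"
      using cell_diameter_small by blast
    then show "\<exists>m. \<forall>x\<in>cell m (cell_index m t). \<forall>y\<in>cell m (cell_index m t). dist x y < e"
      using dist_in_cell[OF cell_index_less] by (meson le_less_trans)
  qed blast
  then have "\<forall>m. curve t \<in> cell m (cell_index m t)"
    unfolding curve_def by (rule someI_ex)
  then show ?thesis ..
qed

lemma dist_curve_at_level:
  assumes "s \<le> t" and "(t - s) * real (M * N ^ m) \<le> 1"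
  shows "dist (curve s) (curve t) \<le> 2 * D / r ^ m"
proof -
  have "cell_index m s \<le> cell_index m t" "cell_index m t \<le> Suc (cell_index m s)"
    using cell_index_mono[OF assms(1)] cell_index_le_Suc[OF assms(2)] by auto
  then consider "cell_index m t = cell_index m s" | "cell_index m t = Suc (cell_index m s)"
    by linarith
  then show ?thesis
  proof cases
    case 1
    then have "curve t \<in> cell m (cell_index m s)"
      using curve_in_cell[of t m] by simp
    then have "dist (curve s) (curve t) \<le> D / r ^ m"
      using dist_in_cell[OF cell_index_less curve_in_cell] by blast
    also have "\<dots> \<le> 2 * D / r ^ m"
      using D_nonneg r_gt_1 by (simp add: divide_right_mono)
    finally show ?thesis .
  next
    case 2
    then obtain z where z: "z \<in> cell m (cell_index m s)" "z \<in> cell m (cell_index m t)"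
      using adjacent_cells_meet cell_index_less by (metis disjoint_iff)
    have "dist (curve s) (curve t) \<le> dist (curve s) z + dist z (curve t)"
      by (rule dist_triangle)
    also have "\<dots> \<le> D / r ^ m + D / r ^ m"
      using dist_in_cell[OF cell_index_less curve_in_cell z(1)]
        dist_in_cell[OF cell_index_less z(2) curve_in_cell] by (rule add_mono)
    finally show ?thesis by simp
  qed
qed

lemma curve_bounded: "\<exists>B. \<forall>s t. dist (curve s) (curve t) \<le> B"
proof -
  let ?S = "\<Union>k<M. cell 0 k"
  have "bounded (cell 0 k)" if k: "k < M" for k
  proof -
    obtain x where "x \<in> cell 0 k"
      using cell_nonempty[of k 0] k by auto
    then have "\<forall>y\<in>cell 0 k. dist x y \<le> D"
      using dist_in_cell[of k 0 x] k by simp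
    then show ?thesis
      unfolding bounded_def by blast
  qed
  then have "bounded ?S"
    by auto
  moreover have "curve t \<in> ?S" for t
    using curve_in_cell[of t 0] cell_index_less[of 0 t] by auto
  ultimately have "dist (curve s) (curve t) \<le> diameter ?S" for s t
    by (intro diameter_bounded_bound)
  then show ?thesis
    by blast
qed

lemma powr_holder_exponent: "(real N ^ k) powr (ln r / ln N) = r ^ k"
proof -
  have "(real N ^ k) powr (ln r / ln N) = exp (real k * ln N * (ln r / ln N))"
    using N_gt_1 by (simp add: powr_def ln_realpow)
  also have "\<dots> = exp (real k * ln r)"
    using N_gt_1 by simp
  also have "\<dots> = r ^ k"
    using r_gt_1 by (simp add: exp_of_nat_mult)
  finally show ?thesis .
qed

lemma level_of_gap:
  assumes "0 < d" and "real M * d \<le> 1"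
  obtains m where "d * real (M * N ^ m) \<le> 1" and "1 < d * real (M * N ^ Suc m)"
proof -
  obtain k where "1 / d < real N ^ k"
    using real_arch_pow[of "real N"] N_gt_1 by auto
  then have "1 < d * real N ^ k"
    using assms(1) by (simp add: field_simps)
  also have "\<dots> \<le> d * real (M * N ^ k)"
    using assms(1) M_pos by (simp add: mult_le_cancel_right1)
  finally have "\<exists>k. 1 < d * real (M * N ^ k)" ..
  then show ?thesis
    using exists_least_lemma[of "\<lambda>k. 1 < d * real (M * N ^ k)"] assms(2) that
    by (auto simp: mult.commute not_less)
qed

lemma dist_curve_small_gap:
  assumes "s < t" and "real M * (t - s) \<le> 1"
  shows "dist (curve s) (curve t) \<le> 2 * D * r * (real M * (t - s)) powr (ln r / ln N)"
proof -
  define g where "g = ln r / ln N"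
  have g_pos: "0 < g"
    unfolding g_def using N_gt_1 r_gt_1 by simp
  obtain m where m: "(t - s) * real (M * N ^ m) \<le> 1" "1 < (t - s) * real (M * N ^ Suc m)"
    using level_of_gap[of "t - s"] assms by auto
  have "dist (curve s) (curve t) \<le> 2 * D / r ^ m"
    using dist_curve_at_level[of s t m] assms(1) m(1) by simp
  also have "\<dots> = 2 * D * r * (1 / (real N ^ Suc m) powr g)"
    unfolding g_def powr_holder_exponent using r_gt_1 by simp
  also have "\<dots> \<le> 2 * D * r * (real M * (t - s)) powr g"
  proof -
    have "1 / real N ^ Suc m < real M * (t - s)"
      using m(2) N_gt_1 by (simp add: field_simps)
    then have "(1 / real N ^ Suc m) powr g \<le> (real M * (t - s)) powr g"
      using g_pos by (intro powr_mono2) auto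
    then show ?thesis
      using D_nonneg r_gt_1 by (intro mult_left_mono) (auto simp: powr_divide)
  qed
  finally show ?thesis
    unfolding g_def .
qed

lemma dist_curve_holder: "\<exists>C. \<forall>s t. dist (curve s) (curve t) \<le> C * dist s t powr (ln r / ln N)"
proof -
  define g where "g = ln r / ln N"
  have g_pos: "0 < g"
    unfolding g_def using N_gt_1 r_gt_1 by simp
  obtain B where B: "\<And>s t. dist (curve s) (curve t) \<le> B"
    using curve_bounded by blast
  have B_nonneg: "0 \<le> B"
    using B[of 0 0] by simp
  define C where "C = (B + 2 * D * r) * real M powr g"
  have lt: "dist (curve s) (curve t) \<le> C * (t - s) powr g" if "s < t" for s t
  proof -
    have "(M * (t - s)) powr g = M powr g * (t - s) powr g"
      using that by (simp add: powr_mult)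
    then have "C * (t - s) powr g = B * (M * (t - s)) powr g + 2 * D * r * (M * (t - s)) powr g"
      unfolding C_def by (simp add: algebra_simps)
    moreover have "dist (curve s) (curve t) \<le> B * (M * (t - s)) powr g"
      if "1 < M * (t - s)"
    proof -
      have "1 \<le> (M * (t - s)) powr g"
        using that g_pos by (intro ge_one_powr_ge_zero) auto
      then show ?thesis
        using B[of s t] B_nonneg mult_left_mono[of 1 "(M * (t - s)) powr g" B] by simp
    qed
    moreover have "0 \<le> B * (M * (t - s)) powr g" "0 \<le> 2 * D * r * (M * (t - s)) powr g"
      using B_nonneg D_nonneg r_gt_1 by simp_all
    ultimately show ?thesis
      using dist_curve_small_gap[OF that] unfolding g_def[symmetric] by fastforce
  qed
  have "dist (curve s) (curve t) \<le> C * dist s t powr g" for s t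
  proof (cases s t rule: linorder_cases)
    case greater
    then show ?thesis
      using lt[of t s] by (simp add: dist_real_def dist_commute)
  qed (use lt in \<open>simp_all add: dist_real_def\<close>)
  then show ?thesis
    unfolding g_def by blast
qed

lemma holder_continuous_curve: "holder_continuous_on (ln r / ln N) {0..1} curve"
  unfolding holder_continuous_on_def using dist_curve_holder by blast

lemma continuous_on_curve: "continuous_on {0..1} curve"
  using holder_continuous_on_imp_continuous_on[OF _ holder_continuous_curve] N_gt_1 r_gt_1
  by simp

lemma curve_image: "curve ` {0..1} = (\<Inter>m. \<Union>k<M * N ^ m. cell m k)"
proof
  show "curve ` {0..1} \<subseteq> (\<Inter>m. \<Union>k<M * N ^ m. cell m k)"
    using curve_in_cell cell_index_less by blast
next
  show "(\<Inter>m. \<Union>k<M * N ^ m. cell m k) \<subseteq> curve ` {0..1}"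
  proof
    fix x assume "x \<in> (\<Inter>m. \<Union>k<M * N ^ m. cell m k)"
    then have "\<forall>m. \<exists>k. k < M * N ^ m \<and> x \<in> cell m k"
      by blast
    then have "\<exists>k. \<forall>m. k m < M * N ^ m \<and> x \<in> cell m (k m)"
      by (rule choice)
    then obtain k where k: "\<And>m. k m < M * N ^ m" "\<And>m. x \<in> cell m (k m)"
      by blast
    define T where "T m = real (k m) / real (M * N ^ m)" for m
    have T: "T m \<in> {0..1}" for m
      using k(1)[of m] M_pos N_gt_1
      by (simp add: T_def divide_le_eq_1 flip: of_nat_mult of_nat_power)
    have "curve (T m) \<in> cell m (k m)" for m
      using curve_in_cell[of "T m" m] cell_index_of_nat[OF k(1)] by (simp add: T_def)
    then have "dist (curve (T m)) x \<le> D / r ^ m" for m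
      using dist_in_cell[OF k(1) _ k(2)] by blast
    then have "\<forall>\<^sub>F m in sequentially. dist (curve (T m)) x \<le> D / r ^ m"
      by (intro always_eventually allI)
    then have "(\<lambda>m. dist (curve (T m)) x) \<longlonglongrightarrow> 0"
      by (intro tendsto_sandwich[OF _ _ tendsto_const LIMSEQ_divide_realpow_zero[OF r_gt_1, of D]])
        simp_all
    then have lim: "(\<lambda>m. curve (T m)) \<longlonglongrightarrow> x"
      by (rule tendsto_dist_iff[THEN iffD2])
    have closed: "closed (curve ` {0..1})"
      by (intro compact_imp_closed compact_continuous_image continuous_on_curve) simp
    show "x \<in> curve ` {0..1}"
      using T by (intro closed_sequentially[OF closed _ lim]) blast
  qed
qed

end

section \<open>Walks of diagonal crossings through grid cells\<close>

(* A cell is crossed along its main diagonal (t) or its antidiagonal; corner t s is the corner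
   where the crossing starts, s reversing the direction. *)
definition corner :: "bool \<Rightarrow> bool \<Rightarrow> nat \<times> nat" where
  "corner t s = (if t then (if s then (1, 1) else (0, 0)) else (if s then (1, 0) else (0, 1)))"

(* The checkerboard choice of diagonals: crossings of neighbouring cells in a row or a column
   meet in a common corner. *)
definition diagonal :: "nat \<times> nat \<Rightarrow> bool" where
  "diagonal c \<longleftrightarrow> even (fst c + snd c)"

definition step_entry :: "('j \<Rightarrow> nat \<times> nat) \<Rightarrow> 'j \<times> bool \<Rightarrow> nat \<times> nat" where
  "step_entry P v = P (fst v) + corner (diagonal (P (fst v))) (snd v)"

definition step_exit :: "('j \<Rightarrow> nat \<times> nat) \<Rightarrow> 'j \<times> bool \<Rightarrow> nat \<times> nat" where
  "step_exit P v = P (fst v) + corner (diagonal (P (fst v))) (\<not> snd v)"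

fun walk :: "('j \<Rightarrow> nat \<times> nat) \<Rightarrow> nat \<times> nat \<Rightarrow> ('j \<times> bool) list \<Rightarrow> nat \<times> nat \<Rightarrow> bool" where
  "walk P p [] q \<longleftrightarrow> p = q"
| "walk P p (v # vs) q \<longleftrightarrow> step_entry P v = p \<and> walk P (step_exit P v) vs q"

lemma walk_append_iff: "walk P p (us @ vs) q \<longleftrightarrow> (\<exists>r. walk P p us r \<and> walk P r vs q)"
  by (induction us arbitrary: p) auto

lemma walk_append: "walk P p us r \<Longrightarrow> walk P r vs q \<Longrightarrow> walk P p (us @ vs) q"
  using walk_append_iff by blast

lemma walk_snoc_iff: "walk P p (vs @ [v]) q \<longleftrightarrow> walk P p vs (step_entry P v) \<and> step_exit P v = q"
  by (induction vs arbitrary: p) auto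

lemma walk_consecutive_steps:
  "walk P p vs q \<Longrightarrow> Suc i < length vs \<Longrightarrow> step_exit P (vs ! i) = step_entry P (vs ! Suc i)"
proof (induction vs arbitrary: p i)
  case (Cons v vs)
  show ?case
  proof (cases i)
    case 0
    then show ?thesis
      using Cons.prems by (cases vs) auto
  next
    case (Suc i')
    then show ?thesis
      using Cons.prems Cons.IH[of "step_exit P v" i'] by auto
  qed
qed simp

lemma walk_first: "walk P p vs q \<Longrightarrow> vs \<noteq> [] \<Longrightarrow> step_entry P (vs ! 0) = p"
  by (cases vs) auto

lemma walk_last: "walk P p vs q \<Longrightarrow> vs \<noteq> [] \<Longrightarrow> step_exit P (last vs) = q"
  by (induction vs arbitrary: p) (auto simp: neq_Nil_conv)

definition reverse_walk :: "('j \<times> bool) list \<Rightarrow> ('j \<times> bool) list" where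
  "reverse_walk vs = rev (map (\<lambda>(j, s). (j, \<not> s)) vs)"

lemma reverse_walk_append: "reverse_walk (us @ vs) = reverse_walk vs @ reverse_walk us"
  by (simp add: reverse_walk_def)

lemma reverse_walk_reverse_walk [simp]: "reverse_walk (reverse_walk vs) = vs"
  by (simp add: reverse_walk_def rev_map comp_def case_prod_beta)

lemma length_reverse_walk [simp]: "length (reverse_walk vs) = length vs"
  by (simp add: reverse_walk_def)

lemma mem_reverse_walk_iff: "(j, s) \<in> set (reverse_walk vs) \<longleftrightarrow> (j, \<not> s) \<in> set vs"
  by (force simp: reverse_walk_def)

lemma letters_reverse_walk [simp]: "fst ` set (reverse_walk vs) = fst ` set vs"
  by (force simp: reverse_walk_def)

lemma walk_reverse_walk: "walk P p vs q \<Longrightarrow> walk P q (reverse_walk vs) p"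
proof (induction vs arbitrary: p)
  case Nil
  then show ?case
    by (simp add: reverse_walk_def)
next
  case (Cons v vs)
  obtain j s where v: "v = (j, s)"
    by fastforce
  have "reverse_walk (v # vs) = reverse_walk vs @ [(j, \<not> s)]"
    by (simp add: reverse_walk_def v)
  with Cons show ?case
    by (simp add: walk_snoc_iff step_entry_def step_exit_def v)
qed

definition detour :: "('j \<times> bool) list \<Rightarrow> ('j \<times> bool) list" where
  "detour vs = vs @ reverse_walk vs"

lemma reverse_walk_detour [simp]: "reverse_walk (detour vs) = detour vs"
  by (simp add: detour_def reverse_walk_append)

lemma walk_detour: "walk P p vs q \<Longrightarrow> walk P p (detour vs) p"
  unfolding detour_def by (blast intro: walk_append walk_reverse_walk)

definition row_walk :: "nat \<Rightarrow> nat \<Rightarrow> (nat \<times> bool) list" where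
  "row_walk j k = map (\<lambda>i. (j + i, False)) [0..<k]"

definition col_walk :: "nat \<Rightarrow> nat \<Rightarrow> nat \<Rightarrow> (nat \<times> bool) list" where
  "col_walk j c k = map (\<lambda>i. (j + i, odd (c + i))) [0..<k]"

lemma walk_row_walk:
  assumes "\<And>i. i < k \<Longrightarrow> P (j + i) = (a + i, b)"
  shows "walk P (a, b + of_bool (odd (a + b))) (row_walk j k) (a + k, b + of_bool (odd (a + b + k)))"
  using assms
proof (induction k)
  case (Suc k)
  then show ?case
    by (auto simp: row_walk_def walk_snoc_iff step_entry_def step_exit_def corner_def diagonal_def)
qed (simp add: row_walk_def)

lemma walk_col_walk:
  assumes "\<And>i. i < k \<Longrightarrow> P (j + i) = (a, b + i)"
  shows "walk P (a + of_bool (odd (a + b)), b) (col_walk j (a + b) k) (a + of_bool (odd (a + b + k)), b + k)"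
  using assms
proof (induction k)
  case (Suc k)
  then show ?case
    by (auto simp: col_walk_def walk_snoc_iff step_entry_def step_exit_def corner_def diagonal_def)
qed (simp add: col_walk_def)

lemma letters_row_walk: "fst ` set (row_walk j k) = {j..<j + k}"
proof -
  have "fst ` set (row_walk j k) = plus j ` {0..<k}"
    by (simp add: row_walk_def image_image)
  then show ?thesis
    by (simp add: add.commute)
qed

lemma letters_col_walk: "fst ` set (col_walk j c k) = {j..<j + k}"
proof -
  have "fst ` set (col_walk j c k) = plus j ` {0..<k}"
    by (simp add: col_walk_def image_image)
  then show ?thesis
    by (simp add: add.commute)
qed

section \<open>The similarities of the construction\<close>

definition of_grid :: "nat \<times> nat \<Rightarrow> real \<times> real" where
  "of_grid c = (real (fst c), real (snd c))"

lemma of_grid_add: "of_grid (a + b) = of_grid a + of_grid b"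
  by (simp add: of_grid_def)

lemma phi_aux_snoc: "phi_aux n eta p (w @ [j]) = phi_aux n eta p w \<circ> psi n (eta (p @ w)) j"
  by (induction w arbitrary: p) auto

lemma phi_snoc: "phi n eta (w @ [j]) = phi n eta w \<circ> psi n (eta w) j"
  by (simp add: phi_def phi_aux_snoc)

lemma phi_aux_affine: "phi_aux n eta p w x = (1 / real n ^ length w) *\<^sub>R x + phi_aux n eta p w 0"
proof (induction w arbitrary: p x)
  case (Cons i w)
  let ?c = "phi_aux n eta (p @ [i]) w 0"
  have "phi_aux n eta p (i # w) x = psi n (eta p) i ((1 / real n ^ length w) *\<^sub>R x + ?c)"
    using Cons.IH[of "p @ [i]" x] by simp
  also have "\<dots> = (1 / real n ^ length (i # w)) *\<^sub>R x + psi n (eta p) i ?c"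
    by (simp add: psi_def scaleR_add_right)
  finally show ?case
    by simp
qed simp

lemma phi_affine: "phi n eta w x = (1 / real n ^ length w) *\<^sub>R x + phi n eta w 0"
  unfolding phi_def by (rule phi_aux_affine)

lemma dist_phi: "dist (phi n eta w x) (phi n eta w y) = dist x y / real n ^ length w"
proof -
  have "dist (phi n eta w x) (phi n eta w y) = norm ((1 / real n ^ length w) *\<^sub>R (x - y))"
    by (subst (1 2) phi_affine) (simp add: dist_norm algebra_simps)
  then show ?thesis
    by (simp add: dist_norm)
qed

lemma continuous_on_phi: "continuous_on S (phi n eta w)"
  by (subst phi_affine[abs_def]) (intro continuous_intros)

lemma mem_unit_square: "(a, b) \<in> unit_square \<longleftrightarrow> 0 \<le> a \<and> a \<le> 1 \<and> 0 \<le> b \<and> b \<le> 1"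
  by (simp add: unit_square_def)

lemma dist_unit_square: "x \<in> unit_square \<Longrightarrow> y \<in> unit_square \<Longrightarrow> dist x y \<le> sqrt 2"
proof -
  assume x: "x \<in> unit_square" and y: "y \<in> unit_square"
  obtain a b c d where xy: "x = (a, b)" "y = (c, d)"
    by (cases x, cases y)
  have "dist a c \<le> 1" "dist b d \<le> 1"
    using x y xy by (auto simp: mem_unit_square dist_real_def)
  then have "(dist a c)\<^sup>2 \<le> 1" "(dist b d)\<^sup>2 \<le> 1"
    by (simp_all add: power_le_one)
  then show ?thesis
    using xy by (simp add: dist_Pair_Pair)
qed

lemma of_grid_corner_in_unit_square: "of_grid (corner t s) \<in> unit_square"
  by (simp add: corner_def of_grid_def mem_unit_square)

section \<open>The walks refining a crossing of a cell\<close>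

(* offs n e j scaled by n: the cell (column, row) of the n x n grid onto which psi n e j maps the
   unit square. *)
definition grid_pos :: "nat \<Rightarrow> nat \<Rightarrow> nat \<Rightarrow> nat \<times> nat" where
  "grid_pos n e j =
    (if 1 \<le> j \<and> j \<le> n then (j - 1, 0)
     else if n + 1 \<le> j \<and> j \<le> 2*n then (j - n - 1, n - 1)
     else if 2*n + 1 \<le> j \<and> j \<le> 3*n - 2 then (0, j - 2*n)
     else if 3*n - 1 \<le> j \<and> j \<le> 4*n - 4 then (n - 1, j + 2 - 3*n)
     else if 4*n - 3 \<le> j \<and> j \<le> 4*n - 3 + (n div 2 - 2)
       then (n div 2 + (j - (4*n - 3)), 1)
     else if 4*n + n div 2 - 4 \<le> j \<and> j \<le> 4*n + n div 2 - 4 + (n div 2 - 2)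
       then (j - (4*n + n div 2 - 4) + 1, if e = 1 then 2 else 1)
     else (0, 0))"

locale even_grid =
  fixes n :: nat
  assumes even_n: "even n" and n_ge_4: "4 \<le> n"
begin

lemma odd_n_minus_1: "odd (n - 1)"
  using even_n n_ge_4 by simp

lemma half_n: "n div 2 + n div 2 = n"
  using even_n by presburger

lemma grid_pos_bottom: "1 \<le> j \<Longrightarrow> j \<le> n \<Longrightarrow> grid_pos n e j = (j - 1, 0)"
  by (simp add: grid_pos_def)

lemma grid_pos_top:
  assumes "n + 1 \<le> j" "j \<le> 2*n"
  shows "grid_pos n e j = (j - n - 1, n - 1)"
proof -
  have c1: "\<not> (1 \<le> j \<and> j \<le> n)"
    using assms by linarith
  show ?thesis
    using assms unfolding grid_pos_def if_not_P[OF c1] by simp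
qed

lemma grid_pos_left:
  assumes "2*n + 1 \<le> j" "j \<le> 3*n - 2"
  shows "grid_pos n e j = (0, j - 2*n)"
proof -
  have c1: "\<not> (1 \<le> j \<and> j \<le> n)" and c2: "\<not> (n + 1 \<le> j \<and> j \<le> 2*n)"
    using assms by linarith+
  show ?thesis
    using assms unfolding grid_pos_def if_not_P[OF c1] if_not_P[OF c2] by simp
qed

lemma grid_pos_right:
  assumes "3*n - 1 \<le> j" "j \<le> 4*n - 4"
  shows "grid_pos n e j = (n - 1, j + 2 - 3*n)"
proof -
  have c1: "\<not> (1 \<le> j \<and> j \<le> n)" and c2: "\<not> (n + 1 \<le> j \<and> j \<le> 2*n)"
    and c3: "\<not> (2*n + 1 \<le> j \<and> j \<le> 3*n - 2)"
    using assms n_ge_4 by linarith+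
  show ?thesis
    using assms unfolding grid_pos_def if_not_P[OF c1] if_not_P[OF c2] if_not_P[OF c3] by simp
qed

lemma grid_pos_right_bar:
  assumes "4*n - 3 \<le> j" "j \<le> 4*n - 3 + (n div 2 - 2)"
  shows "grid_pos n e j = (n div 2 + (j - (4*n - 3)), 1)"
proof -
  have c1: "\<not> (1 \<le> j \<and> j \<le> n)" and c2: "\<not> (n + 1 \<le> j \<and> j \<le> 2*n)"
    and c3: "\<not> (2*n + 1 \<le> j \<and> j \<le> 3*n - 2)" and c4: "\<not> (3*n - 1 \<le> j \<and> j \<le> 4*n - 4)"
    using assms n_ge_4 by linarith+
  show ?thesis
    using assms
    unfolding grid_pos_def if_not_P[OF c1] if_not_P[OF c2] if_not_P[OF c3] if_not_P[OF c4]
    by simp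
qed

lemma grid_pos_left_bar:
  assumes "4*n + n div 2 - 4 \<le> j" "j \<le> 4*n + n div 2 - 4 + (n div 2 - 2)"
  shows "grid_pos n e j = (j - (4*n + n div 2 - 4) + 1, if e = 1 then 2 else 1)"
proof -
  have c1: "\<not> (1 \<le> j \<and> j \<le> n)" and c2: "\<not> (n + 1 \<le> j \<and> j \<le> 2*n)"
    and c3: "\<not> (2*n + 1 \<le> j \<and> j \<le> 3*n - 2)" and c4: "\<not> (3*n - 1 \<le> j \<and> j \<le> 4*n - 4)"
    and c5: "\<not> (4*n - 3 \<le> j \<and> j \<le> 4*n - 3 + (n div 2 - 2))"
    using assms n_ge_4 by linarith+
  show ?thesis
    using assms
    unfolding grid_pos_def if_not_P[OF c1] if_not_P[OF c2] if_not_P[OF c3] if_not_P[OF c4]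
      if_not_P[OF c5]
    by simp
qed

lemma offs_eq_grid_pos: "offs n e j = (1 / real n) *\<^sub>R of_grid (grid_pos n e j)"
proof -
  let ?f = "\<lambda>c. (1 / real n) *\<^sub>R of_grid c"
  have if_rule: "(c \<Longrightarrow> x = ?f u) \<Longrightarrow> y = ?f v \<Longrightarrow> (if c then x else y) = ?f (if c then u else v)"
    for c x y u v
    by simp
  have half: "real (n div 2) = real n / 2"
    using even_n by (simp add: real_of_nat_div)
  show ?thesis
    unfolding offs_def grid_pos_def using n_ge_4
    by (intro if_rule) (simp_all add: half of_grid_def add_divide_distrib diff_divide_distrib)
qed

lemma grid_pos_less: "fst (grid_pos n e j) < n \<and> snd (grid_pos n e j) < n"
proof -
  have if_rule: "(c \<Longrightarrow> fst x < n \<and> snd x < n) \<Longrightarrow> fst y < n \<and> snd y < n \<Longrightarrow>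
      fst (if c then x else y) < n \<and> snd (if c then x else y) < n" for c and x y :: "nat \<times> nat"
    by simp
  show ?thesis
    unfolding grid_pos_def using n_ge_4 half_n by (intro if_rule) auto
qed

lemma psi_of_grid: "psi n e j (of_grid c) = (1 / real n) *\<^sub>R of_grid (grid_pos n e j + c)"
  by (simp add: psi_def offs_eq_grid_pos of_grid_add scaleR_add_right add.commute)

lemma psi_unit_square: "x \<in> unit_square \<Longrightarrow> psi n e j x \<in> unit_square"
proof -
  assume x_in: "x \<in> unit_square"
  obtain a b where x: "x = (a, b)"
    by fastforce
  define g where "g = grid_pos n e j"
  have ab: "0 \<le> a" "a \<le> 1" "0 \<le> b" "b \<le> 1"
    using x_in x by (auto simp: mem_unit_square)
  have g: "real (fst g) + 1 \<le> real n" "real (snd g) + 1 \<le> real n"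
    using grid_pos_less[of e j] unfolding g_def by linarith+
  have "psi n e j x = ((a + real (fst g)) / real n, (b + real (snd g)) / real n)"
    unfolding psi_def offs_eq_grid_pos x g_def of_grid_def by (simp add: add_divide_distrib)
  then show ?thesis
    using ab g n_ge_4 by (simp add: mem_unit_square divide_le_eq_1)
qed

definition bottom_row :: "(nat \<times> bool) list" where
  "bottom_row = row_walk 2 (n - 2)"

definition top_row :: "(nat \<times> bool) list" where
  "top_row = row_walk (n + 2) (n - 2)"

(* The left column is split at row 3, where the left bar is attached when e = 1. *)
definition left_low :: "(nat \<times> bool) list" where
  "left_low = col_walk (2*n + 1) 1 2"

definition left_high :: "(nat \<times> bool) list" where
  "left_high = col_walk (2*n + 3) 3 (n - 4)"

definition right_col :: "(nat \<times> bool) list" where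
  "right_col = col_walk (3*n - 1) n (n - 2)"

definition right_bar :: "(nat \<times> bool) list" where
  "right_bar = row_walk (4*n - 3) (n div 2 - 1)"

definition left_bar :: "(nat \<times> bool) list" where
  "left_bar = row_walk (4*n + n div 2 - 4) (n div 2 - 1)"

lemma walk_bottom_row: "walk (grid_pos n e) (1, 1) bottom_row (n - 1, 1)"
proof -
  have "grid_pos n e (2 + i) = (1 + i, 0)" if "i < n - 2" for i
    using that by (subst grid_pos_bottom) auto
  from walk_row_walk[of "n - 2" "grid_pos n e" 2 1 0, OF this]
  show ?thesis
    using n_ge_4 odd_n_minus_1 by (simp add: bottom_row_def Suc_diff_Suc numeral_2_eq_2)
qed

lemma walk_top_row: "walk (grid_pos n e) (1, n - 1) top_row (n - 1, n - 1)"
proof -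
  have "grid_pos n e (n + 2 + i) = (1 + i, n - 1)" if "i < n - 2" for i
    using that by (subst grid_pos_top) auto
  from walk_row_walk[of "n - 2" "grid_pos n e" "n + 2" 1 "n - 1", OF this]
  show ?thesis
    using n_ge_4 even_n by (simp add: top_row_def Suc_diff_Suc numeral_2_eq_2)
qed

lemma walk_left_low: "walk (grid_pos n e) (1, 1) left_low (1, 3)"
proof -
  have "grid_pos n e (2*n + 1 + i) = (0, 1 + i)" if "i < 2" for i
    using that n_ge_4 by (subst grid_pos_left) auto
  from walk_col_walk[of 2 "grid_pos n e" "2*n + 1" 0 1, OF this]
  show ?thesis
    by (simp add: left_low_def numeral_3_eq_3)
qed

lemma walk_left_high: "walk (grid_pos n e) (1, 3) left_high (1, n - 1)"
proof -
  have "grid_pos n e (2*n + 3 + i) = (0, 3 + i)" if "i < n - 4" for i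
    using that by (subst grid_pos_left) auto
  moreover have "3 + (n - 4) = n - 1"
    using n_ge_4 by arith
  ultimately show ?thesis
    using walk_col_walk[of "n - 4" "grid_pos n e" "2*n + 3" 0 3] odd_n_minus_1
    by (simp add: left_high_def)
qed

lemma walk_right_col: "walk (grid_pos n e) (n - 1, 1) right_col (n - 1, n - 1)"
proof -
  have "grid_pos n e (3*n - 1 + i) = (n - 1, 1 + i)" if "i < n - 2" for i
    using that n_ge_4 by (subst grid_pos_right) auto
  moreover have "n - 1 + 1 = n" "1 + (n - 2) = n - 1"
    using n_ge_4 by arith+
  ultimately show ?thesis
    using walk_col_walk[of "n - 2" "grid_pos n e" "3*n - 1" "n - 1" 1] even_n
    by (simp add: right_col_def)
qed

lemma walk_right_bar_detour: "walk (grid_pos n e) (n - 1, 1) (detour (reverse_walk right_bar)) (n - 1, 1)"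
proof -
  have "grid_pos n e (4*n - 3 + i) = (n div 2 + i, 1)" if "i < n div 2 - 1" for i
    using that n_ge_4 half_n by (subst grid_pos_right_bar) auto
  moreover have "n div 2 + (n div 2 - 1) = n - 1"
    using n_ge_4 half_n by arith
  ultimately have "walk (grid_pos n e) (n div 2, 1 + of_bool (odd (n div 2 + 1))) right_bar (n - 1, 1)"
    using walk_row_walk[of "n div 2 - 1" "grid_pos n e" "4*n - 3" "n div 2" 1] even_n n_ge_4
    by (simp add: right_bar_def)
  then show ?thesis
    by (intro walk_detour walk_reverse_walk)
qed

lemma walk_left_bar_detour:
  fixes e :: nat
  defines "p \<equiv> (1, if e = 1 then 3 else 1)"
  shows "walk (grid_pos n e) p (detour left_bar) p"
proof -
  define b where "b = (if e = 1 then 2 else 1 :: nat)"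
  have "grid_pos n e (4*n + n div 2 - 4 + i) = (1 + i, b)" if "i < n div 2 - 1" for i
    using that n_ge_4 half_n by (subst grid_pos_left_bar) (auto simp: b_def)
  then have "walk (grid_pos n e) (1, b + of_bool (odd (1 + b))) left_bar
      (1 + (n div 2 - 1), b + of_bool (odd (1 + b + (n div 2 - 1))))"
    unfolding left_bar_def by (rule walk_row_walk)
  moreover have "(1, b + of_bool (odd (1 + b))) = p"
    by (simp add: p_def b_def)
  ultimately show ?thesis
    by (metis walk_detour)
qed

definition left_col :: "(nat \<times> bool) list" where
  "left_col = left_low @ left_high"

definition left_col_with_bar :: "nat \<Rightarrow> (nat \<times> bool) list" where
  "left_col_with_bar e =
    (if e = 1 then left_low @ detour left_bar @ left_high else detour left_bar @ left_col)"

lemma walk_left_col: "walk (grid_pos n e) (1, 1) left_col (1, n - 1)"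
  unfolding left_col_def by (rule walk_append[OF walk_left_low walk_left_high])

lemma walk_left_col_with_bar: "walk (grid_pos n e) (1, 1) (left_col_with_bar e) (1, n - 1)"
proof (cases "e = 1")
  case True
  have "walk (grid_pos n e) (1, 3) (detour left_bar) (1, 3)"
    using walk_left_bar_detour[of e] True by simp
  then show ?thesis
    unfolding left_col_with_bar_def if_P[OF True]
    by (rule walk_append[OF walk_left_low walk_append[OF _ walk_left_high]])
next
  case False
  have "walk (grid_pos n e) (1, 1) (detour left_bar) (1, 1)"
    using walk_left_bar_detour[of e] False by simp
  then show ?thesis
    unfolding left_col_with_bar_def if_not_P[OF False]
    by (rule walk_append[OF _ walk_left_col])
qed

lemma grid_pos_corners:
  "grid_pos n e 1 = (0, 0)" "grid_pos n e n = (n - 1, 0)"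
  "grid_pos n e (n + 1) = (0, n - 1)" "grid_pos n e (2*n) = (n - 1, n - 1)"
  using n_ge_4 by (simp_all add: grid_pos_bottom grid_pos_top)

lemma walk_corner_steps:
  "walk (grid_pos n e) (0, 0) [(1, False)] (1, 1)"
  "walk (grid_pos n e) (1, 1) [(1, True)] (0, 0)"
  "walk (grid_pos n e) (1, 1) [(1, True), (1, False)] (1, 1)"
  "walk (grid_pos n e) (n - 1, 1) [(n, False)] (n, 0)"
  "walk (grid_pos n e) (n, 0) [(n, True)] (n - 1, 1)"
  "walk (grid_pos n e) (n - 1, 1) [(n, False), (n, True)] (n - 1, 1)"
  "walk (grid_pos n e) (0, n) [(n + 1, False)] (1, n - 1)"
  "walk (grid_pos n e) (1, n - 1) [(n + 1, True)] (0, n)"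
  "walk (grid_pos n e) (1, n - 1) [(n + 1, True), (n + 1, False)] (1, n - 1)"
  "walk (grid_pos n e) (n - 1, n - 1) [(2*n, False)] (n, n)"
  "walk (grid_pos n e) (n, n) [(2*n, True)] (n - 1, n - 1)"
  "walk (grid_pos n e) (n - 1, n - 1) [(2*n, False), (2*n, True)] (n - 1, n - 1)"
  using n_ge_4 odd_n_minus_1
  unfolding walk.simps step_entry_def step_exit_def fst_conv snd_conv grid_pos_corners
  by (simp_all add: corner_def diagonal_def)

definition plan_diag_up :: "nat \<Rightarrow> (nat \<times> bool) list" where
  "plan_diag_up e = [(1, False)] @ left_col_with_bar e @ [(n + 1, True), (n + 1, False)] @
     reverse_walk left_col @ bottom_row @ right_col @ [(2*n, False)]"

definition plan_diag_down :: "(nat \<times> bool) list" where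
  "plan_diag_down = [(2*n, True)] @ detour (reverse_walk top_row) @ reverse_walk right_col @
     [(n, False), (n, True)] @ detour (reverse_walk right_bar) @ reverse_walk bottom_row @ [(1, True)]"

definition plan_anti_down :: "nat \<Rightarrow> (nat \<times> bool) list" where
  "plan_anti_down e = [(n + 1, False)] @ detour top_row @ reverse_walk (left_col_with_bar e) @
     [(1, True), (1, False)] @ bottom_row @ [(n, False)]"

definition plan_anti_up :: "(nat \<times> bool) list" where
  "plan_anti_up = [(n, True)] @ right_col @ [(2*n, False), (2*n, True)] @ reverse_walk right_col @
     detour (reverse_walk right_bar) @ reverse_walk bottom_row @ left_col @ [(n + 1, True)]"

lemma walk_plan_diag_up: "walk (grid_pos n e) (0, 0) (plan_diag_up e) (n, n)"
  unfolding plan_diag_up_def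
  by (rule walk_append[OF walk_corner_steps(1) walk_append[OF walk_left_col_with_bar
        walk_append[OF walk_corner_steps(9) walk_append[OF walk_reverse_walk[OF walk_left_col]
        walk_append[OF walk_bottom_row walk_append[OF walk_right_col walk_corner_steps(10)]]]]]])

lemma walk_plan_diag_down: "walk (grid_pos n e) (n, n) plan_diag_down (0, 0)"
  unfolding plan_diag_down_def
  by (rule walk_append[OF walk_corner_steps(11) walk_append[OF
        walk_detour[OF walk_reverse_walk[OF walk_top_row]] walk_append[OF
        walk_reverse_walk[OF walk_right_col] walk_append[OF walk_corner_steps(6) walk_append[OF
        walk_right_bar_detour walk_append[OF walk_reverse_walk[OF walk_bottom_row]
        walk_corner_steps(2)]]]]]])

lemma walk_plan_anti_down: "walk (grid_pos n e) (0, n) (plan_anti_down e) (n, 0)"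
  unfolding plan_anti_down_def
  by (rule walk_append[OF walk_corner_steps(7) walk_append[OF walk_detour[OF walk_top_row]
        walk_append[OF walk_reverse_walk[OF walk_left_col_with_bar] walk_append[OF
        walk_corner_steps(3) walk_append[OF walk_bottom_row walk_corner_steps(4)]]]]])

lemma walk_plan_anti_up: "walk (grid_pos n e) (n, 0) plan_anti_up (0, n)"
  unfolding plan_anti_up_def
  by (rule walk_append[OF walk_corner_steps(5) walk_append[OF walk_right_col walk_append[OF
        walk_corner_steps(12) walk_append[OF walk_reverse_walk[OF walk_right_col] walk_append[OF
        walk_right_bar_detour walk_append[OF walk_reverse_walk[OF walk_bottom_row]
        walk_append[OF walk_left_col walk_corner_steps(8)]]]]]]])

definition plan :: "bool \<Rightarrow> nat \<Rightarrow> bool \<Rightarrow> (nat \<times> bool) list" where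
  "plan t e s =
    (if t then (if s then plan_diag_down else plan_diag_up e)
     else (if s then plan_anti_up else plan_anti_down e))"

lemma walk_plan:
  "walk (grid_pos n e) (n * fst (corner t s), n * snd (corner t s)) (plan t e s)
     (n * fst (corner t (\<not> s)), n * snd (corner t (\<not> s)))"
  using walk_plan_diag_up walk_plan_diag_down walk_plan_anti_down walk_plan_anti_up
  by (cases t; cases s) (simp_all add: plan_def corner_def)

lemma length_plan: "length (plan t e s) = 5*n - 6"
  using half_n n_ge_4
  by (cases t; cases s)
    (simp_all add: plan_def plan_diag_up_def plan_diag_down_def plan_anti_down_def plan_anti_up_def
      left_col_with_bar_def left_col_def detour_def bottom_row_def top_row_def left_low_def
      left_high_def right_col_def right_bar_def left_bar_def row_walk_def col_walk_def)

definition blocks :: "(nat \<times> bool) list list" where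
  "blocks = [bottom_row, top_row, left_col, right_col, right_bar, left_bar]"

lemma letters_blocks:
  "fst ` set bottom_row = {2..<n}"
  "fst ` set top_row = {n + 2..<2*n}"
  "fst ` set left_col = {2*n + 1..<3*n - 1}"
  "fst ` set right_col = {3*n - 1..<4*n - 3}"
  "fst ` set right_bar = {4*n - 3..<4*n + n div 2 - 4}"
  "fst ` set left_bar = {4*n + n div 2 - 4..<5*n - 5}"
proof -
  have ends: "2 + (n - 2) = n" "n + 2 + (n - 2) = 2*n" "2*n + 3 + (n - 4) = 3*n - 1"
    "3*n - 1 + (n - 2) = 4*n - 3" "4*n - 3 + (n div 2 - 1) = 4*n + n div 2 - 4"
    "4*n + n div 2 - 4 + (n div 2 - 1) = 5*n - 5" "2*n + 1 + 2 = 2*n + 3"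
    using n_ge_4 half_n by linarith+
  have "{2*n + 1..<2*n + 3} \<union> {2*n + 3..<3*n - 1} = {2*n + 1..<3*n - 1}"
    using n_ge_4 by (intro ivl_disj_un_two(3)) auto
  then show "fst ` set left_col = {2*n + 1..<3*n - 1}"
    unfolding left_col_def left_low_def left_high_def set_append image_Un letters_col_walk ends
    by simp
  show "fst ` set bottom_row = {2..<n}" "fst ` set top_row = {n + 2..<2*n}"
    "fst ` set right_col = {3*n - 1..<4*n - 3}"
    "fst ` set right_bar = {4*n - 3..<4*n + n div 2 - 4}"
    "fst ` set left_bar = {4*n + n div 2 - 4..<5*n - 5}"
    unfolding bottom_row_def top_row_def right_col_def right_bar_def left_bar_def
      letters_row_walk letters_col_walk ends by simp_all
qed

lemma alph_eq_blocks: "alph n = {1, n, n + 1, 2*n} \<union> (\<Union>B\<in>set blocks. fst ` set B)"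
proof -
  have blocks: "(\<Union>B\<in>set blocks. fst ` set B) = {2..<n} \<union> {n + 2..<2*n} \<union> {2*n + 1..<3*n - 1} \<union>
      {3*n - 1..<4*n - 3} \<union> {4*n - 3..<4*n + n div 2 - 4} \<union> {4*n + n div 2 - 4..<5*n - 5}"
    by (simp add: blocks_def letters_blocks Un_assoc)
  have "j \<in> {1, n, n + 1, 2*n} \<union> (\<Union>B\<in>set blocks. fst ` set B)" if "j \<in> alph n" for j
  proof -
    have j: "1 \<le> j" "j \<le> 5*n - 6"
      using that by (simp_all add: alph_def)
    show ?thesis
    proof (cases "j \<le> 2*n")
      case True
      then have "j \<in> {1, n, n + 1, 2*n} \<or> j \<in> {2..<n} \<or> j \<in> {n + 2..<2*n}"
        using j by simp linarith
      then show ?thesis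
        unfolding blocks by blast
    next
      case False
      then have "j \<in> {2*n + 1..<3*n - 1} \<or> j \<in> {3*n - 1..<4*n - 3} \<or>
          j \<in> {4*n - 3..<4*n + n div 2 - 4} \<or> j \<in> {4*n + n div 2 - 4..<5*n - 5}"
        using j half_n by simp linarith
      then show ?thesis
        unfolding blocks by blast
    qed
  qed
  moreover have "{1, n, n + 1, 2*n} \<union> (\<Union>B\<in>set blocks. fst ` set B) \<subseteq> alph n"
    using n_ge_4 half_n unfolding blocks alph_def by auto
  ultimately show ?thesis
    by blast
qed

lemma blocks_in_plans:
  assumes "B \<in> set blocks"
  shows "set B \<union> set (reverse_walk B) \<subseteq> set (plan t e False) \<union> set (plan t e True)"
  using assms
  by (cases t)
    (auto simp: blocks_def plan_def plan_diag_up_def plan_diag_down_def plan_anti_down_def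
      plan_anti_up_def left_col_with_bar_def left_col_def detour_def reverse_walk_append)

lemma corners_in_plans:
  assumes "c \<in> {1, n, n + 1, 2*n}"
  shows "(c, s) \<in> set (plan t e False) \<union> set (plan t e True)"
  using assms
  by (cases t; cases s)
    (auto simp: plan_def plan_diag_up_def plan_diag_down_def plan_anti_down_def plan_anti_up_def)

lemma plan_in_blocks:
  "set (plan t e s) \<subseteq> {1, n, n + 1, 2*n} \<times> UNIV \<union> (\<Union>B\<in>set blocks. set B \<union> set (reverse_walk B))"
  by (cases t; cases s)
    (auto simp: blocks_def plan_def plan_diag_up_def plan_diag_down_def plan_anti_down_def
      plan_anti_up_def left_col_with_bar_def left_col_def detour_def reverse_walk_append)

lemma letters_plan: "fst ` set (plan t e s) \<subseteq> alph n"
proof -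
  have "fst ` set (plan t e s) \<subseteq>
      fst ` ({1, n, n + 1, 2*n} \<times> UNIV \<union> (\<Union>B\<in>set blocks. set B \<union> set (reverse_walk B)))"
    using plan_in_blocks by (rule image_mono)
  also have "\<dots> = alph n"
    unfolding alph_eq_blocks by (simp add: image_Un image_UN)
  finally show ?thesis .
qed

lemma plans_cover:
  assumes "j \<in> alph n"
  shows "(j, s) \<in> set (plan t e False) \<union> set (plan t e True)"
proof -
  consider "j \<in> {1, n, n + 1, 2*n}" | B where "B \<in> set blocks" "j \<in> fst ` set B"
    using assms unfolding alph_eq_blocks by blast
  then show ?thesis
  proof cases
    case 1
    then show ?thesis
      by (rule corners_in_plans)
  next
    case (2 B)
    then obtain b where "(j, b) \<in> set B"
      by auto
    then have "(j, s) \<in> set B \<union> set (reverse_walk B)"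
      by (cases "s = b") (auto simp: mem_reverse_walk_iff)
    then show ?thesis
      using blocks_in_plans[OF 2(1)] by blast
  qed
qed

section \<open>The chain of tiles\<close>

abbreviation N :: nat where
  "N \<equiv> 5 * n - 6"

lemma N_gt_1: "1 < N"
  using n_ge_4 by simp

(* The curve first crosses the unit square diagonally and then crosses it back, so that both
   directions occur at level 0. address eta m k consists of the word, the diagonal type and the
   direction of the k-th of the 2 N^m crossings of level m. *)
fun address :: "(nat list \<Rightarrow> nat) \<Rightarrow> nat \<Rightarrow> nat \<Rightarrow> nat list \<times> bool \<times> bool" where
  "address eta 0 k = ([], True, k = 1)"
| "address eta (Suc m) k =
    (let (w, t, s) = address eta m (k div N); (j, s') = plan t (eta w) s ! (k mod N)
     in (w @ [j], diagonal (grid_pos n (eta w) j), s'))"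

lemma address_Suc:
  assumes "address eta m (k div N) = (w, t, s)" and "plan t (eta w) s ! (k mod N) = (j, s')"
  shows "address eta (Suc m) k = (w @ [j], diagonal (grid_pos n (eta w) j), s')"
  using assms by simp

lemma length_address: "length (fst (address eta m k)) = m"
proof (induction m arbitrary: k)
  case (Suc m)
  obtain w t s where a: "address eta m (k div N) = (w, t, s)"
    by (metis prod.exhaust)
  obtain j s' where v: "plan t (eta w) s ! (k mod N) = (j, s')"
    by fastforce
  show ?case
    using Suc.IH[of "k div N"] address_Suc[OF a v] a by simp
qed simp

lemma address_in_alph: "set (fst (address eta m k)) \<subseteq> alph n"
proof (induction m arbitrary: k)
  case (Suc m)
  obtain w t s where a: "address eta m (k div N) = (w, t, s)"
    by (metis prod.exhaust)
  obtain j s' where v: "plan t (eta w) s ! (k mod N) = (j, s')"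
    by fastforce
  have "k mod N < length (plan t (eta w) s)"
    using length_plan N_gt_1 by simp
  then have "j \<in> alph n"
    using letters_plan[of t "eta w" s] v by (metis fst_conv image_subset_iff nth_mem)
  moreover have "set w \<subseteq> alph n"
    using Suc.IH[of "k div N"] a by simp
  ultimately show ?case
    using address_Suc[OF a v] by simp
qed simp

definition tile :: "(nat list \<Rightarrow> nat) \<Rightarrow> nat \<Rightarrow> nat \<Rightarrow> (real \<times> real) set" where
  "tile eta m k = phi n eta (fst (address eta m k)) ` unit_square"

definition tile_entry :: "(nat list \<Rightarrow> nat) \<Rightarrow> nat \<Rightarrow> nat \<Rightarrow> real \<times> real" where
  "tile_entry eta m k = (case address eta m k of (w, t, s) \<Rightarrow> phi n eta w (of_grid (corner t s)))"

definition tile_exit :: "(nat list \<Rightarrow> nat) \<Rightarrow> nat \<Rightarrow> nat \<Rightarrow> real \<times> real" where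
  "tile_exit eta m k = (case address eta m k of (w, t, s) \<Rightarrow> phi n eta w (of_grid (corner t (\<not> s))))"

lemma tile_entry_in_tile: "tile_entry eta m k \<in> tile eta m k"
  using of_grid_corner_in_unit_square
  by (auto simp: tile_entry_def tile_def split: prod.split)

lemma tile_exit_in_tile: "tile_exit eta m k \<in> tile eta m k"
  using of_grid_corner_in_unit_square
  by (auto simp: tile_exit_def tile_def split: prod.split)

lemma tile_Suc_subset: "tile eta (Suc m) k \<subseteq> tile eta m (k div N)"
proof -
  obtain w t s where a: "address eta m (k div N) = (w, t, s)"
    by (metis prod.exhaust)
  obtain j s' where v: "plan t (eta w) s ! (k mod N) = (j, s')"
    by fastforce
  have "psi n (eta w) j ` unit_square \<subseteq> unit_square"
    using psi_unit_square by blast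
  then show ?thesis
    unfolding tile_def address_Suc[OF a v] a by (auto simp: phi_snoc image_comp[symmetric])
qed

lemma dist_in_tile:
  assumes "x \<in> tile eta m k" and "y \<in> tile eta m k"
  shows "dist x y \<le> sqrt 2 / real n ^ m"
proof -
  obtain a b where ab: "a \<in> unit_square" "b \<in> unit_square"
    "x = phi n eta (fst (address eta m k)) a" "y = phi n eta (fst (address eta m k)) b"
    using assms unfolding tile_def by blast
  have "dist x y = dist a b / real n ^ m"
    using ab by (simp add: dist_phi length_address)
  also have "\<dots> \<le> sqrt 2 / real n ^ m"
    using dist_unit_square[OF ab(1,2)] n_ge_4 by (simp add: divide_right_mono)
  finally show ?thesis .
qed

lemma closed_tile: "closed (tile eta m k)"
  unfolding tile_def unit_square_def
  by (intro compact_imp_closed compact_continuous_image continuous_on_phi compact_cbox)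

lemma tile_entry_exit_Suc:
  assumes "address eta m (k div N) = (w, t, s)"
  defines "v \<equiv> plan t (eta w) s ! (k mod N)"
  shows "tile_entry eta (Suc m) k = phi n eta w ((1 / real n) *\<^sub>R of_grid (step_entry (grid_pos n (eta w)) v))"
    and "tile_exit eta (Suc m) k = phi n eta w ((1 / real n) *\<^sub>R of_grid (step_exit (grid_pos n (eta w)) v))"
proof -
  obtain j s' where v: "v = (j, s')"
    by fastforce
  have a: "address eta (Suc m) k = (w @ [j], diagonal (grid_pos n (eta w) j), s')"
    using address_Suc[OF assms(1)] v unfolding v_def by blast
  show "tile_entry eta (Suc m) k = phi n eta w ((1 / real n) *\<^sub>R of_grid (step_entry (grid_pos n (eta w)) v))"
    unfolding tile_entry_def a by (simp add: phi_snoc psi_of_grid step_entry_def v)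
  show "tile_exit eta (Suc m) k = phi n eta w ((1 / real n) *\<^sub>R of_grid (step_exit (grid_pos n (eta w)) v))"
    unfolding tile_exit_def a by (simp add: phi_snoc psi_of_grid step_exit_def v)
qed

lemma of_grid_scaled_corner: "(1 / real n) *\<^sub>R of_grid (n * fst c, n * snd c) = of_grid c"
  using n_ge_4 by (simp add: of_grid_def)

lemma tile_exit_eq_entry_sibling:
  assumes "Suc (k mod N) < N"
  shows "tile_exit eta (Suc m) k = tile_entry eta (Suc m) (Suc k)"
proof -
  obtain w t s where a: "address eta m (k div N) = (w, t, s)"
    by (metis prod.exhaust)
  have Suc_k: "Suc k div N = k div N" "Suc k mod N = Suc (k mod N)"
    using assms by (simp_all add: div_Suc mod_Suc)
  have "step_exit (grid_pos n (eta w)) (plan t (eta w) s ! (k mod N)) =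
      step_entry (grid_pos n (eta w)) (plan t (eta w) s ! Suc (k mod N))"
    using walk_consecutive_steps[OF walk_plan] assms length_plan by simp
  then show ?thesis
    using tile_entry_exit_Suc[OF a] tile_entry_exit_Suc[of eta m "Suc k"] a Suc_k by simp
qed

lemma tile_exit_last_child:
  assumes "k mod N = N - 1"
  shows "tile_exit eta (Suc m) k = tile_exit eta m (k div N)"
proof -
  obtain w t s where a: "address eta m (k div N) = (w, t, s)"
    by (metis prod.exhaust)
  let ?L = "plan t (eta w) s"
  have nonempty: "?L \<noteq> []"
    using length_plan[of t "eta w" s] N_gt_1 by auto
  then have last: "last ?L = ?L ! (k mod N)"
    using assms length_plan[of t "eta w" s] by (simp add: last_conv_nth)
  have "step_exit (grid_pos n (eta w)) (last ?L) = (n * fst (corner t (\<not> s)), n * snd (corner t (\<not> s)))"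
    by (rule walk_last[OF walk_plan nonempty])
  then show ?thesis
    using tile_entry_exit_Suc(2)[OF a] a last by (simp add: of_grid_scaled_corner tile_exit_def)
qed

lemma tile_entry_first_child:
  assumes "k mod N = 0"
  shows "tile_entry eta (Suc m) k = tile_entry eta m (k div N)"
proof -
  obtain w t s where a: "address eta m (k div N) = (w, t, s)"
    by (metis prod.exhaust)
  let ?L = "plan t (eta w) s"
  have nonempty: "?L \<noteq> []"
    using length_plan[of t "eta w" s] N_gt_1 by auto
  have "step_entry (grid_pos n (eta w)) (?L ! 0) = (n * fst (corner t s), n * snd (corner t s))"
    by (rule walk_first[OF walk_plan nonempty])
  then show ?thesis
    using tile_entry_exit_Suc(1)[OF a] a assms by (simp add: of_grid_scaled_corner tile_entry_def)
qed

lemma tile_exit_eq_entry: "Suc k < 2 * N ^ m \<Longrightarrow> tile_exit eta m k = tile_entry eta m (Suc k)"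
proof (induction m arbitrary: k)
  case 0
  then show ?case
    by (simp add: tile_exit_def tile_entry_def corner_def)
next
  case (Suc m)
  show ?case
  proof (cases "Suc (k mod N) < N")
    case True
    then show ?thesis
      by (rule tile_exit_eq_entry_sibling)
  next
    case False
    then have last: "k mod N = N - 1"
      using mod_less_divisor[of N k] N_gt_1 by linarith
    then have first: "Suc k mod N = 0" and next_parent: "Suc k div N = Suc (k div N)"
      using N_gt_1 by (simp_all add: mod_Suc div_Suc)
    have "N * (k div N) + k mod N = k"
      by (rule mult_div_mod_eq)
    then have "N * (k div N) + (N - 1) = k"
      unfolding last .
    then have "N * Suc (k div N) = Suc k"
      using N_gt_1 unfolding mult_Suc_right by linarith
    moreover have "2 * N ^ Suc m = N * (2 * N ^ m)"
      by simp
    ultimately have "N * Suc (k div N) < N * (2 * N ^ m)"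
      using Suc.prems by linarith
    then have "Suc (k div N) < 2 * N ^ m"
      by (rule mult_left_less_imp_less) simp
    then show ?thesis
      using Suc.IH tile_exit_last_child[OF last] tile_entry_first_child[OF first] next_parent
      by simp
  qed
qed

lemma address_onto:
  assumes "set w \<subseteq> alph n"
  shows "\<exists>t. \<forall>s. \<exists>k < 2 * N ^ length w. address eta (length w) k = (w, t, s)"
  using assms
proof (induction w rule: rev_induct)
  case Nil
  show ?case
  proof (intro exI[of _ True] allI)
    fix s
    show "\<exists>k < 2 * N ^ length []. address eta (length []) k = ([], True, s)"
      by (intro exI[of _ "of_bool s"]) simp
  qed
next
  case (snoc j w)
  have w: "set w \<subseteq> alph n" and j: "j \<in> alph n"
    using snoc.prems by auto
  obtain t where t: "\<And>s. \<exists>k < 2 * N ^ length w. address eta (length w) k = (w, t, s)"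
    using snoc.IH[OF w] by blast
  have "\<exists>k < 2 * N ^ length (w @ [j]). address eta (length (w @ [j])) k =
      (w @ [j], diagonal (grid_pos n (eta w) j), s')" for s'
  proof -
    obtain s where "(j, s') \<in> set (plan t (eta w) s)"
      using plans_cover[OF j] by blast
    then obtain i where i: "i < N" "plan t (eta w) s ! i = (j, s')"
      using length_plan by (metis in_set_conv_nth)
    obtain k where k: "k < 2 * N ^ length w" "address eta (length w) k = (w, t, s)"
      using t by blast
    have "(N * k + i) div N = k" "(N * k + i) mod N = i"
      using i(1) by simp_all
    then have "address eta (Suc (length w)) (N * k + i) = (w @ [j], diagonal (grid_pos n (eta w) j), s')"
      using address_Suc[of eta "length w" "N * k + i"] k(2) i(2) by simp
    moreover have "N * k + i < 2 * N ^ Suc (length w)"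
    proof -
      have "N * k + i < N * Suc k"
        using i(1) by simp
      also have "\<dots> \<le> N * (2 * N ^ length w)"
        using k(1) by (intro mult_left_mono) auto
      finally show ?thesis
        by (simp add: algebra_simps)
    qed
    ultimately show ?thesis
      by auto
  qed
  then show ?case
    by blast
qed

lemma tiles_eq_Keta: "(\<Inter>m. \<Union>k<2 * N ^ m. tile eta m k) = Keta n eta"
proof -
  have "(\<Union>k<2 * N ^ m. tile eta m k) =
      (\<Union>w\<in>{w. set w \<subseteq> alph n \<and> length w = m}. phi n eta w ` unit_square)" for m
  proof (intro equalityI subsetI)
    fix x assume "x \<in> (\<Union>k<2 * N ^ m. tile eta m k)"
    then show "x \<in> (\<Union>w\<in>{w. set w \<subseteq> alph n \<and> length w = m}. phi n eta w ` unit_square)"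
      using address_in_alph length_address unfolding tile_def by blast
  next
    fix x assume "x \<in> (\<Union>w\<in>{w. set w \<subseteq> alph n \<and> length w = m}. phi n eta w ` unit_square)"
    then obtain w where w: "set w \<subseteq> alph n" "length w = m" "x \<in> phi n eta w ` unit_square"
      by blast
    then obtain k t where "k < 2 * N ^ m" "address eta m k = (w, t, False)"
      using address_onto[OF w(1)] by blast
    then show "x \<in> (\<Union>k<2 * N ^ m. tile eta m k)"
      using w(3) unfolding tile_def by force
  qed
  then show ?thesis
    unfolding Keta_def by simp
qed

lemma nested_cells_tile: "nested_cells 2 N (real n) (sqrt 2) (tile eta)"
proof
  show "0 < (2::nat)" "1 < N" "1 < real n"
    using N_gt_1 n_ge_4 by simp_all
  show "closed (tile eta m k)" for m k
    by (rule closed_tile)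
  show "tile eta m k \<noteq> {}" for m k
    using tile_entry_in_tile[of eta m k] by blast
  show "tile eta (Suc m) k \<subseteq> tile eta m (k div N)" for m k
    by (rule tile_Suc_subset)
  show "dist x y \<le> sqrt 2 / real n ^ m" if "x \<in> tile eta m k" "y \<in> tile eta m k" for x y m k
    using dist_in_tile that .
  show "tile eta m k \<inter> tile eta m (Suc k) \<noteq> {}" if "Suc k < 2 * N ^ m" for m k
    using tile_exit_in_tile tile_entry_in_tile tile_exit_eq_entry[OF that] by (metis disjoint_iff)
qed

end

theorem proposition6p1:
  fixes n :: nat and eta :: "nat list \<Rightarrow> nat"
  assumes "even n" and "n \<ge> 4"
    and "\<forall>w. set w \<subseteq> alph n \<longrightarrow> eta w \<in> {1, 2}"
  shows "\<exists>f :: real \<Rightarrow> real \<times> real.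
           holder_continuous_on (1 / (ln (real (5*n - 6)) / ln (real n))) {0..1} f
         \<and> f ` {0..1} = Keta n eta"
proof -
  interpret even_grid n
    using assms(1,2) by unfold_locales
  interpret nested_cells 2 "5*n - 6" "real n" "sqrt 2" "tile eta"
    by (rule nested_cells_tile)
  show ?thesis
    using holder_continuous_curve curve_image tiles_eq_Keta by auto
qed

end
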